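(* Let $A$ be a $\star$-hypercentral T-brace whose additive group $(A,+)$ is not periodic, and let $T$ be the torsion subgroup of $(A,+)$. Then $T$ is an ideal of $A$ and the quotient brace $A/T$ is abelian.
   Context: A (left) brace is a set $A$ with two operations $+$ and $\cdot$ such that $(A,+)$ is an abelian group, $(A,\cdot)$ is a group, and $a(b+c)=ab+ac-a$ for all $a,b,c\in A$. Put $a\star b=ab-a-b$. A subbrace is a subset which is a subgroup of both $(A,+)$ and $(A,\cdot)$; a subbrace $L$ is an ideal if $a\star z, z\star a\in L$ for all $a\in A$, $z\in L$, and then the quotient brace $A/L$ is defined. A brace is abelian if $a\star b=0$ for all $a,b$. $A$ is a T-brace if whenever $I$ is an ideal of $J$ and $J$ is an ideal of $A$, then $I$ is an ideal of $A$. The $\star$-center is $\zeta(\star,A)=\{a\in A: a\star x=x\star a=0 \ \forall x\in A\}$. The upper $\star$-central series: $\zeta_0(\star,A)=0$, $\zeta_{\alpha+1}(\star,A)/\zeta_\alpha(\star,A)=\zeta(\star,A/\zeta_\alpha(\star,A))$, unions at limit ordinals; its last term is $\zeta_\infty(\star,A)$. $A$ is $\star$-hypercentral if $A=\zeta_\infty(\star,A)$. *)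

theory Defs
  imports "HOL-Algebra.Group"
begin

record 'a brace_struct =
  bcar :: "'a set"
  badd :: "'a \<Rightarrow> 'a \<Rightarrow> 'a"
  bzero :: 'a
  bmul :: "'a \<Rightarrow> 'a \<Rightarrow> 'a"
  bone :: 'a

definition addgrp :: "('a, 'b) brace_struct_scheme \<Rightarrow> 'a monoid" where
  "addgrp B = \<lparr>carrier = bcar B, mult = badd B, one = bzero B\<rparr>"

definition mulgrp :: "('a, 'b) brace_struct_scheme \<Rightarrow> 'a monoid" where
  "mulgrp B = \<lparr>carrier = bcar B, mult = bmul B, one = bone B\<rparr>"

definition bneg :: "('a, 'b) brace_struct_scheme \<Rightarrow> 'a \<Rightarrow> 'a" where
  "bneg B a = inv\<^bsub>addgrp B\<^esub> a"

definition bsub :: "('a, 'b) brace_struct_scheme \<Rightarrow> 'a \<Rightarrow> 'a \<Rightarrow> 'a" where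
  "bsub B a b = badd B a (bneg B b)"

definition brace :: "('a, 'b) brace_struct_scheme \<Rightarrow> bool" where
  "brace B \<longleftrightarrow> comm_group (addgrp B) \<and> group (mulgrp B) \<and>
     (\<forall>a\<in>bcar B. \<forall>b\<in>bcar B. \<forall>c\<in>bcar B.
        bmul B a (badd B b c) = bsub B (badd B (bmul B a b) (bmul B a c)) a)"

definition bstar :: "('a, 'b) brace_struct_scheme \<Rightarrow> 'a \<Rightarrow> 'a \<Rightarrow> 'a" where
  "bstar B a b = bsub B (bsub B (bmul B a b) a) b"

definition subbrace :: "'a set \<Rightarrow> ('a, 'b) brace_struct_scheme \<Rightarrow> bool" where
  "subbrace L B \<longleftrightarrow> subgroup L (addgrp B) \<and> subgroup L (mulgrp B)"

definition brace_ideal :: "'a set \<Rightarrow> ('a, 'b) brace_struct_scheme \<Rightarrow> bool" where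
  "brace_ideal L B \<longleftrightarrow> subbrace L B \<and>
     (\<forall>a\<in>bcar B. \<forall>z\<in>L. bstar B a z \<in> L \<and> bstar B z a \<in> L)"

definition sub_brace :: "('a, 'b) brace_struct_scheme \<Rightarrow> 'a set \<Rightarrow> ('a, 'b) brace_struct_scheme" where
  "sub_brace B J = B\<lparr>bcar := J\<rparr>"

definition T_brace :: "('a, 'b) brace_struct_scheme \<Rightarrow> bool" where
  "T_brace B \<longleftrightarrow> (\<forall>I J. brace_ideal J B \<and> brace_ideal I (sub_brace B J) \<longrightarrow> brace_ideal I B)"

definition bcoset :: "('a, 'b) brace_struct_scheme \<Rightarrow> 'a set \<Rightarrow> 'a \<Rightarrow> 'a set" where
  "bcoset B L a = {badd B a l | l. l \<in> L}"

definition quot_brace :: "('a, 'b) brace_struct_scheme \<Rightarrow> 'a set \<Rightarrow> 'a set brace_struct" where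
  "quot_brace B L =
     \<lparr>bcar = bcoset B L ` bcar B,
      badd = (\<lambda>X Y. bcoset B L (badd B (SOME x. x \<in> X) (SOME y. y \<in> Y))),
      bzero = bcoset B L (bzero B),
      bmul = (\<lambda>X Y. bcoset B L (bmul B (SOME x. x \<in> X) (SOME y. y \<in> Y))),
      bone = bcoset B L (bone B)\<rparr>"

definition abelian_brace :: "('a, 'b) brace_struct_scheme \<Rightarrow> bool" where
  "abelian_brace B \<longleftrightarrow> (\<forall>a\<in>bcar B. \<forall>b\<in>bcar B. bstar B a b = bzero B)"

definition torsion :: "('a, 'b) brace_struct_scheme \<Rightarrow> 'a set" where
  "torsion B = {a \<in> bcar B. \<exists>n::nat. n > 0 \<and> a [^]\<^bsub>addgrp B\<^esub> n = bzero B}"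

definition add_periodic :: "('a, 'b) brace_struct_scheme \<Rightarrow> bool" where
  "add_periodic B \<longleftrightarrow> torsion B = bcar B"

text \<open>Last term \<zeta>_\<infinity>(\<star>,A) of the upper \<star>-central series.  The series is the
transfinite iteration (unions at limits) of S \<mapsto> preimage of \<zeta>(\<star>,A/S), i.e.
S \<mapsto> {a. \<forall>x. a\<star>x \<in> S \<and> x\<star>a \<in> S}, starting from 0; its final term is the
least set closed under this step, defined inductively below.\<close>
inductive_set zeta_inf :: "('a, 'b) brace_struct_scheme \<Rightarrow> 'a set" for B where
  zero: "bzero B \<in> zeta_inf B"
| step: "\<lbrakk>a \<in> bcar B; \<forall>x\<in>bcar B. bstar B a x \<in> zeta_inf B \<and> bstar B x a \<in> zeta_inf B\<rbrakk>
          \<Longrightarrow> a \<in> zeta_inf B"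

definition star_hypercentral :: "('a, 'b) brace_struct_scheme \<Rightarrow> bool" where
  "star_hypercentral B \<longleftrightarrow> bcar B = zeta_inf B"

end

theory Submission
  imports Defs "HOL-Algebra.Generated_Groups"
begin

text \<open>
  Call an ideal I torsion-central if all products in I \<open>\<star>\<close> A and A \<open>\<star>\<close> I are additive
  torsion elements. Sums of such ideals are again torsion-central, so there is a largest
  one, R. The heart of the proof is that R absorbs the next term of the upper
  \<open>\<star>\<close>-central series: if a \<open>\<star>\<close> A and A \<open>\<star>\<close> a lie in R, then modulo the ideal
  N = R \<open>\<inter>\<close> T the element a lies in the second \<open>\<star>\<close>-centre, and the T-property,
  applied to the ideal \<open>\<int>a + \<zeta>(\<star>, A/N)\<close> and its ideal \<open>\<int>a + \<int>(a \<star> a) + N\<close>,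
  shows that a \<open>\<star>\<close> x and x \<open>\<star>\<close> a are torsion modulo N. Hence \<open>\<int>a + R\<close> is
  torsion-central and a \<open>\<in>\<close> R. By induction along the series, A \<open>\<subseteq>\<close> R, i.e.
  A \<open>\<star>\<close> A \<open>\<subseteq>\<close> T, which makes T an ideal with abelian quotient.
\<close>

lemma addgrp_simps [simp]:
  "carrier (addgrp B) = bcar B" "mult (addgrp B) = badd B" "one (addgrp B) = bzero B"
  by (simp_all add: addgrp_def)

lemma mulgrp_simps [simp]:
  "carrier (mulgrp B) = bcar B" "mult (mulgrp B) = bmul B" "one (mulgrp B) = bone B"
  by (simp_all add: mulgrp_def)

locale left_brace =
  fixes B :: "('a, 'b) brace_struct_scheme"
  assumes brace: "brace B"
begin

abbreviation "A \<equiv> bcar B"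
abbreviation add (infixl "\<oplus>" 65) where "x \<oplus> y \<equiv> badd B x y"
abbreviation mult (infixl "\<odot>" 70) where "x \<odot> y \<equiv> bmul B x y"
abbreviation star (infixl "\<star>" 70) where "x \<star> y \<equiv> bstar B x y"
abbreviation zero ("\<zero>") where "\<zero> \<equiv> bzero B"
abbreviation neg where "neg x \<equiv> bneg B x"
abbreviation minv where "minv x \<equiv> inv\<^bsub>mulgrp B\<^esub> x"

sublocale add: comm_group "addgrp B"
  using brace by (simp add: brace_def)

sublocale mult: group "mulgrp B"
  using brace by (simp add: brace_def)

lemma add_closed [simp, intro]: "x \<in> A \<Longrightarrow> y \<in> A \<Longrightarrow> x \<oplus> y \<in> A"
  using add.m_closed by simp

lemma mult_closed [simp, intro]: "x \<in> A \<Longrightarrow> y \<in> A \<Longrightarrow> x \<odot> y \<in> A"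
  using mult.m_closed by simp

lemma zero_closed [simp, intro]: "\<zero> \<in> A"
  using add.one_closed by simp

lemma neg_closed [simp, intro]: "x \<in> A \<Longrightarrow> neg x \<in> A"
  using add.inv_closed by (simp add: bneg_def)

lemma minv_closed [simp, intro]: "x \<in> A \<Longrightarrow> minv x \<in> A"
  using mult.inv_closed by simp

lemma add_assoc: "x \<in> A \<Longrightarrow> y \<in> A \<Longrightarrow> z \<in> A \<Longrightarrow> x \<oplus> y \<oplus> z = x \<oplus> (y \<oplus> z)"
  using add.m_assoc by simp

lemma add_commute: "x \<in> A \<Longrightarrow> y \<in> A \<Longrightarrow> x \<oplus> y = y \<oplus> x"
  using add.m_comm by simp

lemma add_left_commute: "x \<in> A \<Longrightarrow> y \<in> A \<Longrightarrow> z \<in> A \<Longrightarrow> x \<oplus> (y \<oplus> z) = y \<oplus> (x \<oplus> z)"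
  using add.m_lcomm by simp

lemmas add_ac = add_assoc add_commute add_left_commute

lemma add_zero_left [simp]: "x \<in> A \<Longrightarrow> \<zero> \<oplus> x = x"
  using add.l_one by simp

lemma add_zero_right [simp]: "x \<in> A \<Longrightarrow> x \<oplus> \<zero> = x"
  using add.r_one by simp

lemma neg_add_self [simp]: "x \<in> A \<Longrightarrow> neg x \<oplus> x = \<zero>"
  using add.l_inv by (simp add: bneg_def)

lemma add_neg_self [simp]: "x \<in> A \<Longrightarrow> x \<oplus> neg x = \<zero>"
  using add.r_inv by (simp add: bneg_def)

lemma neg_add_cancel_left [simp]: "x \<in> A \<Longrightarrow> y \<in> A \<Longrightarrow> neg x \<oplus> (x \<oplus> y) = y"
  by (simp flip: add_assoc)

lemma add_neg_cancel_left [simp]: "x \<in> A \<Longrightarrow> y \<in> A \<Longrightarrow> x \<oplus> (neg x \<oplus> y) = y"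
  by (simp flip: add_assoc)

lemma add_neg_cancel_simps [simp]:
  "x \<in> A \<Longrightarrow> y \<in> A \<Longrightarrow> z \<in> A \<Longrightarrow> x \<oplus> (y \<oplus> (neg x \<oplus> z)) = y \<oplus> z"
  "x \<in> A \<Longrightarrow> y \<in> A \<Longrightarrow> z \<in> A \<Longrightarrow> neg x \<oplus> (y \<oplus> (x \<oplus> z)) = y \<oplus> z"
  "x \<in> A \<Longrightarrow> y \<in> A \<Longrightarrow> x \<oplus> (y \<oplus> neg x) = y"
  "x \<in> A \<Longrightarrow> y \<in> A \<Longrightarrow> neg x \<oplus> (y \<oplus> x) = y"
  by (metis add_left_commute neg_closed add_neg_cancel_left add_closed,
      metis add_left_commute neg_closed neg_add_cancel_left add_closed,
      metis add_commute neg_closed add_neg_cancel_left,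
      metis add_commute neg_closed neg_add_cancel_left)

lemma neg_neg [simp]: "x \<in> A \<Longrightarrow> neg (neg x) = x"
  using add.inv_inv by (simp add: bneg_def)

lemma neg_add: "x \<in> A \<Longrightarrow> y \<in> A \<Longrightarrow> neg (x \<oplus> y) = neg x \<oplus> neg y"
  using add.inv_mult by (simp add: bneg_def)

lemma neg_zero [simp]: "neg \<zero> = \<zero>"
  using add.inv_one by (simp add: bneg_def)

lemma add_left_cancel: "x \<in> A \<Longrightarrow> y \<in> A \<Longrightarrow> z \<in> A \<Longrightarrow> x \<oplus> y = x \<oplus> z \<longleftrightarrow> y = z"
  using add.Units_l_cancel add.Units_eq by simp

lemma neg_unique: "x \<in> A \<Longrightarrow> y \<in> A \<Longrightarrow> x \<oplus> y = \<zero> \<Longrightarrow> x = neg y"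
  by (metis add_assoc add_neg_self add_zero_left add_zero_right neg_closed)

lemma mult_add_distrib:
  "a \<in> A \<Longrightarrow> b \<in> A \<Longrightarrow> c \<in> A \<Longrightarrow> a \<odot> (b \<oplus> c) = a \<odot> b \<oplus> a \<odot> c \<oplus> neg a"
  using brace by (simp add: brace_def bsub_def)

lemma one_eq_zero: "bone B = \<zero>"
proof -
  have "\<zero> \<odot> (\<zero> \<oplus> \<zero>) = \<zero> \<odot> \<zero> \<oplus> \<zero> \<odot> \<zero> \<oplus> neg \<zero>"
    by (rule mult_add_distrib) auto
  then have "\<zero> \<odot> \<zero> \<oplus> \<zero> = \<zero> \<odot> \<zero> \<oplus> \<zero> \<odot> \<zero>"
    by simp
  then have "\<zero> \<odot> \<zero> = \<zero>"
    by (metis add_left_cancel mult_closed zero_closed)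
  then show ?thesis
    by (metis mult.l_cancel_one mulgrp_simps zero_closed)
qed

lemma mult_zero_left [simp]: "x \<in> A \<Longrightarrow> \<zero> \<odot> x = x"
  using mult.l_one by (simp add: one_eq_zero)

lemma mult_zero_right [simp]: "x \<in> A \<Longrightarrow> x \<odot> \<zero> = x"
  using mult.r_one by (simp add: one_eq_zero)

lemma minv_mult_self [simp]: "x \<in> A \<Longrightarrow> minv x \<odot> x = \<zero>"
  using mult.l_inv by (simp add: one_eq_zero)

lemma mult_minv_self [simp]: "x \<in> A \<Longrightarrow> x \<odot> minv x = \<zero>"
  using mult.r_inv by (simp add: one_eq_zero)

lemma mult_assoc: "x \<in> A \<Longrightarrow> y \<in> A \<Longrightarrow> z \<in> A \<Longrightarrow> x \<odot> y \<odot> z = x \<odot> (y \<odot> z)"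
  using mult.m_assoc by simp

lemma star_eq: "a \<star> b = a \<odot> b \<oplus> neg a \<oplus> neg b"
  by (simp add: bstar_def bsub_def)

lemma star_closed [simp, intro]: "a \<in> A \<Longrightarrow> b \<in> A \<Longrightarrow> a \<star> b \<in> A"
  by (simp add: star_eq)

lemma mult_eq_add_star: "a \<in> A \<Longrightarrow> b \<in> A \<Longrightarrow> a \<odot> b = a \<oplus> b \<oplus> a \<star> b"
  by (simp add: star_eq add_ac neg_add)

lemma star_zero_left [simp]: "x \<in> A \<Longrightarrow> \<zero> \<star> x = \<zero>"
  by (simp add: star_eq)

lemma star_zero_right [simp]: "x \<in> A \<Longrightarrow> x \<star> \<zero> = \<zero>"
  by (simp add: star_eq)

lemma star_add_right: "a \<in> A \<Longrightarrow> b \<in> A \<Longrightarrow> c \<in> A \<Longrightarrow> a \<star> (b \<oplus> c) = a \<star> b \<oplus> a \<star> c"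
  by (simp add: star_eq mult_add_distrib neg_add add_ac)

lemma star_neg_right: "a \<in> A \<Longrightarrow> b \<in> A \<Longrightarrow> a \<star> neg b = neg (a \<star> b)"
proof -
  assume ab: "a \<in> A" "b \<in> A"
  have "a \<star> neg b \<oplus> a \<star> b = a \<star> (neg b \<oplus> b)"
    using ab by (metis star_add_right neg_closed)
  also have "\<dots> = \<zero>"
    using ab by simp
  finally have "a \<star> neg b \<oplus> a \<star> b = \<zero>" .
  then show ?thesis
    using ab by (intro neg_unique) auto
qed

lemma mult_neg_right: "a \<in> A \<Longrightarrow> b \<in> A \<Longrightarrow> a \<odot> neg b = a \<oplus> a \<oplus> neg (a \<odot> b)"
proof -
  assume ab: "a \<in> A" "b \<in> A"
  have "a \<odot> (b \<oplus> neg b) = a \<odot> b \<oplus> a \<odot> neg b \<oplus> neg a"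
    using ab by (intro mult_add_distrib) auto
  then have "a = a \<odot> b \<oplus> a \<odot> neg b \<oplus> neg a"
    using ab by simp
  then have "a \<oplus> a \<oplus> neg (a \<odot> b) = a \<odot> b \<oplus> a \<odot> neg b \<oplus> neg a \<oplus> a \<oplus> neg (a \<odot> b)"
    by simp
  also have "\<dots> = a \<odot> neg b"
    using ab by (simp add: add_ac)
  finally show ?thesis
    by simp
qed

definition lam :: "'a \<Rightarrow> 'a \<Rightarrow> 'a" where
  "lam u x = u \<star> x \<oplus> x"

lemma lam_eq: "u \<in> A \<Longrightarrow> x \<in> A \<Longrightarrow> lam u x = neg u \<oplus> u \<odot> x"
  by (simp add: lam_def star_eq add_ac)

lemma lam_closed [simp, intro]: "u \<in> A \<Longrightarrow> x \<in> A \<Longrightarrow> lam u x \<in> A"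
  by (simp add: lam_def)

lemma lam_mult: "u \<in> A \<Longrightarrow> v \<in> A \<Longrightarrow> x \<in> A \<Longrightarrow> lam u (lam v x) = lam (u \<odot> v) x"
  by (simp add: lam_eq mult_add_distrib mult_neg_right neg_add add_ac mult_assoc)

lemma star_mult_left:
  "u \<in> A \<Longrightarrow> v \<in> A \<Longrightarrow> x \<in> A \<Longrightarrow> (u \<odot> v) \<star> x = u \<star> (v \<star> x) \<oplus> u \<star> x \<oplus> v \<star> x"
proof -
  assume uvx: "u \<in> A" "v \<in> A" "x \<in> A"
  have "(u \<odot> v) \<star> x = lam (u \<odot> v) x \<oplus> neg x"
    using uvx by (simp add: lam_def add_ac)
  also have "\<dots> = lam u (lam v x) \<oplus> neg x"
    using uvx by (simp add: lam_mult)
  also have "\<dots> = u \<star> (v \<star> x) \<oplus> u \<star> x \<oplus> v \<star> x"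
    using uvx by (simp add: lam_def star_add_right add_ac)
  finally show ?thesis .
qed

lemma mult_eq_add_lam: "u \<in> A \<Longrightarrow> x \<in> A \<Longrightarrow> u \<odot> x = u \<oplus> lam u x"
  by (simp add: lam_eq)

lemma lam_zero [simp]: "x \<in> A \<Longrightarrow> lam \<zero> x = x"
  by (simp add: lam_def)

lemma add_eq_mult_lam:
  assumes "u \<in> A" "v \<in> A"
  shows "u \<oplus> v = u \<odot> lam (minv u) v"
proof -
  have "u \<odot> lam (minv u) v = u \<oplus> lam u (lam (minv u) v)"
    using assms by (intro mult_eq_add_lam) auto
  also have "\<dots> = u \<oplus> v"
    using assms by (simp add: lam_mult)
  finally show ?thesis ..
qed

lemma star_add_left:
  assumes "u \<in> A" "v \<in> A" "x \<in> A"
  shows "(u \<oplus> v) \<star> x = u \<star> x \<oplus> (u \<star> (lam (minv u) v \<star> x) \<oplus> lam (minv u) v \<star> x)"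
proof -
  have "(u \<oplus> v) \<star> x = (u \<odot> lam (minv u) v) \<star> x"
    using assms by (simp only: add_eq_mult_lam)
  then show ?thesis
    using assms by (simp add: star_mult_left add_ac)
qed

lemma minv_add_star: "x \<in> A \<Longrightarrow> minv x \<oplus> (x \<oplus> minv x \<star> x) = \<zero>"
  using mult_eq_add_star[of "minv x" x] by (simp add: add_assoc)

lemma minv_eq: "x \<in> A \<Longrightarrow> minv x = neg (x \<oplus> minv x \<star> x)"
  using minv_add_star by (intro neg_unique) auto

lemma neg_eq_minv_add_star: "x \<in> A \<Longrightarrow> neg x = minv x \<oplus> minv x \<star> x"
proof -
  assume x: "x \<in> A"
  have "minv x \<oplus> minv x \<star> x \<oplus> x = \<zero>"
    using minv_add_star[OF x] x by (simp add: add_ac)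
  then show ?thesis
    using x by (intro neg_unique[symmetric]) auto
qed

definition zmult :: "int \<Rightarrow> 'a \<Rightarrow> 'a" (infixr "\<cdot>" 75) where
  "m \<cdot> x = x [^]\<^bsub>addgrp B\<^esub> m"

lemma zmult_closed [simp, intro]: "x \<in> A \<Longrightarrow> m \<cdot> x \<in> A"
  unfolding zmult_def using add.int_pow_closed by simp

lemma zmult_add_left: "x \<in> A \<Longrightarrow> (m + n) \<cdot> x = m \<cdot> x \<oplus> n \<cdot> x"
  unfolding zmult_def using add.int_pow_mult by simp

lemma zmult_zmult: "x \<in> A \<Longrightarrow> m \<cdot> n \<cdot> x = (m * n) \<cdot> x"
  unfolding zmult_def using add.int_pow_pow by (simp add: mult.commute)

lemma zmult_add_right: "x \<in> A \<Longrightarrow> y \<in> A \<Longrightarrow> m \<cdot> (x \<oplus> y) = m \<cdot> x \<oplus> m \<cdot> y"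
  unfolding zmult_def using add.int_pow_mult_distrib add.m_comm by simp

lemma zmult_one [simp]: "x \<in> A \<Longrightarrow> 1 \<cdot> x = x"
  unfolding zmult_def using add.int_pow_1 by simp

lemma zmult_zero_left [simp]: "0 \<cdot> x = \<zero>"
  unfolding zmult_def by simp

lemma zmult_zero_right [simp]: "m \<cdot> \<zero> = \<zero>"
  unfolding zmult_def using add.int_pow_one by simp

lemma zmult_uminus: "x \<in> A \<Longrightarrow> (- m) \<cdot> x = neg (m \<cdot> x)"
  unfolding zmult_def bneg_def using add.int_pow_neg by simp

lemma zmult_neg: "x \<in> A \<Longrightarrow> m \<cdot> neg x = neg (m \<cdot> x)"
  unfolding zmult_def bneg_def using add.int_pow_inv by simp

lemma zmult_diff_one: "x \<in> A \<Longrightarrow> (m - 1) \<cdot> x = m \<cdot> x \<oplus> neg x"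
  using zmult_add_left[of x m "- 1"] by (simp add: zmult_uminus)

lemma star_zmult_right: "a \<in> A \<Longrightarrow> b \<in> A \<Longrightarrow> a \<star> m \<cdot> b = m \<cdot> (a \<star> b)"
proof (induction m rule: int_induct[where k = 0])
  case (step1 i)
  then show ?case
    by (simp add: zmult_add_left star_add_right)
next
  case (step2 i)
  then show ?case
    by (simp add: zmult_diff_one star_add_right star_neg_right)
qed simp

definition add_subgroup :: "'a set \<Rightarrow> bool" where
  "add_subgroup S \<longleftrightarrow>
    S \<subseteq> A \<and> \<zero> \<in> S \<and> (\<forall>x\<in>S. \<forall>y\<in>S. x \<oplus> y \<in> S) \<and> (\<forall>x\<in>S. neg x \<in> S)"

lemma add_subgroupD:
  assumes "add_subgroup S"
  shows add_subgroup_subset: "S \<subseteq> A"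
    and add_subgroup_zero: "\<zero> \<in> S"
    and add_subgroup_add: "x \<in> S \<Longrightarrow> y \<in> S \<Longrightarrow> x \<oplus> y \<in> S"
    and add_subgroup_neg: "x \<in> S \<Longrightarrow> neg x \<in> S"
  using assms by (auto simp: add_subgroup_def)

lemma add_subgroup_iff_subgroup: "add_subgroup S \<longleftrightarrow> subgroup S (addgrp B)"
proof
  assume "add_subgroup S"
  then show "subgroup S (addgrp B)"
    by unfold_locales (auto simp: add_subgroup_def bneg_def)
next
  assume "subgroup S (addgrp B)"
  then show "add_subgroup S"
    using subgroup.subset subgroup.m_closed subgroup.one_closed subgroup.m_inv_closed
    by (fastforce simp: add_subgroup_def bneg_def)
qed

lemma zmult_in_add_subgroup: "add_subgroup S \<Longrightarrow> x \<in> S \<Longrightarrow> m \<cdot> x \<in> S"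
  unfolding add_subgroup_iff_subgroup zmult_def using add.subgroup_int_pow_closed by blast

lemma add_subgroup_add_cancel_right:
  "add_subgroup S \<Longrightarrow> x \<in> A \<Longrightarrow> s \<in> S \<Longrightarrow> x \<oplus> s \<in> S \<Longrightarrow> x \<in> S"
  using add_subgroup_add[of S "x \<oplus> s" "neg s"] add_subgroup_neg[of S s] add_subgroup_subset[of S]
  by (auto simp: add_assoc)

lemma add_subgroup_Int: "add_subgroup S \<Longrightarrow> add_subgroup S' \<Longrightarrow> add_subgroup (S \<inter> S')"
  by (auto simp: add_subgroup_def)

lemma add_subgroup_set_plus:
  assumes S1: "add_subgroup S1" and S2: "add_subgroup S2"
  shows "add_subgroup {u \<oplus> v | u v. u \<in> S1 \<and> v \<in> S2}" (is "add_subgroup ?S")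
  unfolding add_subgroup_def
proof (intro conjI ballI)
  show "?S \<subseteq> A"
    using add_subgroup_subset[OF S1] add_subgroup_subset[OF S2] by auto
  have "\<zero> = \<zero> \<oplus> \<zero>"
    by simp
  then show "\<zero> \<in> ?S"
    using add_subgroup_zero[OF S1] add_subgroup_zero[OF S2] by blast
next
  fix x y
  assume "x \<in> ?S" "y \<in> ?S"
  then obtain u v u' v' where x: "x = u \<oplus> v" "u \<in> S1" "v \<in> S2"
    and y: "y = u' \<oplus> v'" "u' \<in> S1" "v' \<in> S2"
    by blast
  moreover have "u \<in> A" "v \<in> A" "u' \<in> A" "v' \<in> A"
    using x y add_subgroup_subset[OF S1] add_subgroup_subset[OF S2] by auto
  ultimately have "x \<oplus> y = (u \<oplus> u') \<oplus> (v \<oplus> v')"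
    by (simp add: add_ac)
  then show "x \<oplus> y \<in> ?S"
    using x y add_subgroup_add[OF S1] add_subgroup_add[OF S2] by blast
next
  fix x
  assume "x \<in> ?S"
  then obtain u v where x: "x = u \<oplus> v" "u \<in> S1" "v \<in> S2"
    by blast
  moreover have "u \<in> A" "v \<in> A"
    using x add_subgroup_subset[OF S1] add_subgroup_subset[OF S2] by auto
  ultimately have "neg x = neg u \<oplus> neg v"
    by (simp add: neg_add)
  then show "neg x \<in> ?S"
    using x add_subgroup_neg[OF S1] add_subgroup_neg[OF S2] by blast
qed

abbreviation Tor :: "'a set" where
  "Tor \<equiv> torsion B"

lemma torsion_iff: "t \<in> Tor \<longleftrightarrow> t \<in> A \<and> (\<exists>n::nat. n > 0 \<and> int n \<cdot> t = \<zero>)"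
  by (simp add: torsion_def zmult_def int_pow_int)

lemma add_subgroup_torsion: "add_subgroup Tor"
  unfolding add_subgroup_def
proof (intro conjI ballI)
  show "Tor \<subseteq> A" and "\<zero> \<in> Tor"
    by (auto simp: torsion_iff intro: exI[of _ 1])
next
  fix x y
  assume "x \<in> Tor" "y \<in> Tor"
  then obtain n k where x: "x \<in> A" "n > 0" "int n \<cdot> x = \<zero>"
    and y: "y \<in> A" "k > 0" "int k \<cdot> y = \<zero>"
    by (auto simp: torsion_iff)
  have "int (n * k) \<cdot> x = int k \<cdot> int n \<cdot> x" "int (n * k) \<cdot> y = int n \<cdot> int k \<cdot> y"
    using x(1) y(1) by (simp_all add: zmult_zmult mult.commute)
  then have "int (n * k) \<cdot> (x \<oplus> y) = \<zero>"
    using x y by (simp only: zmult_add_right) simp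
  then show "x \<oplus> y \<in> Tor"
    using x y by (auto simp: torsion_iff intro!: exI[of _ "n * k"])
next
  fix x
  assume "x \<in> Tor"
  then show "neg x \<in> Tor"
    by (auto simp: torsion_iff zmult_neg)
qed

lemma torsion_of_zmult:
  assumes x: "x \<in> A" and m: "m \<noteq> 0" and mx: "m \<cdot> x \<in> Tor"
  shows "x \<in> Tor"
proof -
  obtain n where n: "n > 0" "int n \<cdot> m \<cdot> x = \<zero>"
    using mx by (auto simp: torsion_iff)
  then have "(m * int n) \<cdot> x = \<zero>"
    using x by (simp add: zmult_zmult mult.commute)
  then have "\<bar>m * int n\<bar> \<cdot> x = \<zero>"
    using x by (simp add: abs_if zmult_uminus)
  moreover have "\<bar>m * int n\<bar> > 0"
    using m n by simp
  ultimately show ?thesis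
    using x by (auto simp: torsion_iff intro!: exI[of _ "nat \<bar>m * int n\<bar>"])
qed

definition cong_mod :: "'a set \<Rightarrow> 'a \<Rightarrow> 'a \<Rightarrow> bool" where
  "cong_mod S a b \<longleftrightarrow> a \<in> A \<and> b \<in> A \<and> a \<oplus> neg b \<in> S"

context
  fixes S :: "'a set"
  assumes S: "add_subgroup S"
begin

lemma cong_mod_refl: "a \<in> A \<Longrightarrow> cong_mod S a a"
  using S by (simp add: cong_mod_def add_subgroup_zero)

lemma cong_mod_sym: "cong_mod S a b \<Longrightarrow> cong_mod S b a"
  using S add_subgroup_neg[OF S, of "a \<oplus> neg b"] by (simp add: cong_mod_def neg_add add_commute)

lemma cong_mod_trans: "cong_mod S a b \<Longrightarrow> cong_mod S b c \<Longrightarrow> cong_mod S a c"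
  using add_subgroup_add[OF S, of "a \<oplus> neg b" "b \<oplus> neg c"] by (simp add: cong_mod_def add_assoc)

lemma cong_mod_add: "cong_mod S a b \<Longrightarrow> cong_mod S c d \<Longrightarrow> cong_mod S (a \<oplus> c) (b \<oplus> d)"
  using add_subgroup_add[OF S, of "a \<oplus> neg b" "c \<oplus> neg d"]
  by (simp add: cong_mod_def add_ac neg_add)

lemma cong_mod_zmult: "cong_mod S a b \<Longrightarrow> cong_mod S (m \<cdot> a) (m \<cdot> b)"
  using zmult_in_add_subgroup[OF S, of "a \<oplus> neg b" m]
  by (simp add: cong_mod_def zmult_add_right zmult_neg)

lemma mem_if_cong_mod: "cong_mod S a b \<Longrightarrow> b \<in> S \<Longrightarrow> a \<in> S"
  using add_subgroup_add[OF S, of "a \<oplus> neg b" b] by (simp add: cong_mod_def add_assoc)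

lemma cong_mod_add_member: "a \<in> A \<Longrightarrow> s \<in> S \<Longrightarrow> cong_mod S (a \<oplus> s) a"
  using add_subgroup_subset[OF S] by (auto simp: cong_mod_def add_ac)

lemma cong_mod_zero: "a \<in> S \<Longrightarrow> cong_mod S a \<zero>"
  using add_subgroup_subset[OF S] by (auto simp: cong_mod_def)

end

lemma cong_mod_mono: "S \<subseteq> S' \<Longrightarrow> cong_mod S a b \<Longrightarrow> cong_mod S' a b"
  by (auto simp: cong_mod_def)

definition is_ideal :: "'a set \<Rightarrow> bool" where
  "is_ideal I \<longleftrightarrow> add_subgroup I \<and> (\<forall>a\<in>A. \<forall>z\<in>I. a \<star> z \<in> I \<and> z \<star> a \<in> I)"

lemma is_idealD:
  assumes "is_ideal I"
  shows is_ideal_add_subgroup: "add_subgroup I"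
    and is_ideal_star_left: "a \<in> A \<Longrightarrow> z \<in> I \<Longrightarrow> a \<star> z \<in> I"
    and is_ideal_star_right: "a \<in> A \<Longrightarrow> z \<in> I \<Longrightarrow> z \<star> a \<in> I"
  using assms by (auto simp: is_ideal_def)

lemma mult_subgroupI:
  assumes I: "add_subgroup I"
    and star: "\<And>x y. x \<in> I \<Longrightarrow> y \<in> I \<Longrightarrow> x \<star> y \<in> I"
    and minv_star: "\<And>x. x \<in> I \<Longrightarrow> minv x \<star> x \<in> I"
  shows "subgroup I (mulgrp B)"
proof
  show "I \<subseteq> carrier (mulgrp B)" and "\<one>\<^bsub>mulgrp B\<^esub> \<in> I"
    using I by (simp_all add: add_subgroupD one_eq_zero)
next
  fix x y
  assume xy: "x \<in> I" "y \<in> I"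
  then have "x \<oplus> y \<oplus> x \<star> y \<in> I"
    using I star by (simp add: add_subgroup_add)
  moreover have "x \<in> A" "y \<in> A"
    using xy add_subgroup_subset[OF I] by auto
  ultimately show "x \<otimes>\<^bsub>mulgrp B\<^esub> y \<in> I"
    by (simp add: mult_eq_add_star)
next
  fix x
  assume x: "x \<in> I"
  then have "neg (x \<oplus> minv x \<star> x) \<in> I"
    using I minv_star by (simp add: add_subgroupD)
  then show "inv\<^bsub>mulgrp B\<^esub> x \<in> I"
    using x add_subgroup_subset[OF I] by (auto simp flip: minv_eq)
qed

lemma brace_ideal_iff: "brace_ideal I B \<longleftrightarrow> is_ideal I"
proof
  assume "brace_ideal I B"
  then show "is_ideal I"
    by (simp add: brace_ideal_def subbrace_def is_ideal_def add_subgroup_iff_subgroup)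
next
  assume I: "is_ideal I"
  have IA: "I \<subseteq> A"
    using add_subgroup_subset[OF is_ideal_add_subgroup[OF I]] .
  have "subgroup I (mulgrp B)"
    using IA by (intro mult_subgroupI is_ideal_add_subgroup[OF I] is_ideal_star_left[OF I]) auto
  then show "brace_ideal I B"
    using I by (simp add: brace_ideal_def subbrace_def is_ideal_def add_subgroup_iff_subgroup)
qed

lemma brace_ideal_sub_brace:
  assumes J: "is_ideal J" and I: "add_subgroup I" "I \<subseteq> J"
    and star: "\<And>j i. j \<in> J \<Longrightarrow> i \<in> I \<Longrightarrow> j \<star> i \<in> I \<and> i \<star> j \<in> I"
  shows "brace_ideal I (sub_brace B J)"
proof -
  have J_add: "subgroup J (addgrp B)" and J_mult: "subgroup J (mulgrp B)"
    using J by (simp_all add: brace_ideal_iff[symmetric] brace_ideal_def subbrace_def)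
  have "subgroup I (mulgrp B)"
  proof (rule mult_subgroupI[OF I(1)])
    show "x \<star> y \<in> I" if "x \<in> I" "y \<in> I" for x y
      using star that I(2) by blast
    show "minv x \<star> x \<in> I" if "x \<in> I" for x
      using star that I(2) subgroup.m_inv_closed[OF J_mult] by auto
  qed
  then have "subgroup I (mulgrp (sub_brace B J))"
    using mult.subgroup_incl J_mult I(2) by (simp add: mulgrp_def sub_brace_def)
  moreover have "subgroup I (addgrp (sub_brace B J))"
    using add.subgroup_incl J_add I
    by (simp add: addgrp_def sub_brace_def add_subgroup_iff_subgroup)
  moreover have "bstar (sub_brace B J) j i = j \<star> i" if "j \<in> J" "i \<in> J" for i j
    using that add.m_inv_consistent[OF J_add]
    by (simp add: bstar_def bsub_def bneg_def addgrp_def sub_brace_def)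
  ultimately show ?thesis
    using star I(2) by (auto simp: brace_ideal_def subbrace_def sub_brace_def)
qed

lemma T_brace_is_ideal:
  assumes "T_brace B" "is_ideal J" "add_subgroup I" "I \<subseteq> J"
    and "\<And>j i. j \<in> J \<Longrightarrow> i \<in> I \<Longrightarrow> j \<star> i \<in> I \<and> i \<star> j \<in> I"
  shows "is_ideal I"
proof -
  have "brace_ideal I (sub_brace B J)"
    using assms(2-5) by (rule brace_ideal_sub_brace)
  moreover have "brace_ideal J B"
    using assms(2) by (simp add: brace_ideal_iff)
  ultimately show ?thesis
    using assms(1) unfolding T_brace_def brace_ideal_iff by blast
qed

definition zspan :: "'a \<Rightarrow> 'a set \<Rightarrow> 'a set" where
  "zspan a S = {m \<cdot> a \<oplus> s | m s. s \<in> S}"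

lemma add_subgroup_zmultiples:
  assumes a: "a \<in> A"
  shows "add_subgroup (range (\<lambda>m. m \<cdot> a))"
  unfolding add_subgroup_def
proof (intro conjI ballI)
  show "range (\<lambda>m. m \<cdot> a) \<subseteq> A"
    using a by auto
  show "\<zero> \<in> range (\<lambda>m. m \<cdot> a)"
    using rangeI[of "\<lambda>m. m \<cdot> a" 0] by simp
next
  fix x y
  assume "x \<in> range (\<lambda>m. m \<cdot> a)" "y \<in> range (\<lambda>m. m \<cdot> a)"
  then obtain m n where "x = m \<cdot> a" "y = n \<cdot> a"
    by blast
  then have "x \<oplus> y = (m + n) \<cdot> a"
    using a by (simp add: zmult_add_left)
  then show "x \<oplus> y \<in> range (\<lambda>m. m \<cdot> a)"
    by simp
next
  fix x
  assume "x \<in> range (\<lambda>m. m \<cdot> a)"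
  then obtain m where "x = m \<cdot> a"
    by blast
  then have "neg x = (- m) \<cdot> a"
    using a by (simp add: zmult_uminus)
  then show "neg x \<in> range (\<lambda>m. m \<cdot> a)"
    by simp
qed

lemma add_subgroup_zspan:
  assumes "a \<in> A" "add_subgroup S"
  shows "add_subgroup (zspan a S)"
proof -
  have "zspan a S = {u \<oplus> s | u s. u \<in> range (\<lambda>m. m \<cdot> a) \<and> s \<in> S}"
    unfolding zspan_def by blast
  then show ?thesis
    using add_subgroup_set_plus[OF add_subgroup_zmultiples assms(2)] assms(1) by simp
qed

lemma subset_zspan: "add_subgroup S \<Longrightarrow> S \<subseteq> zspan a S"
proof
  fix s
  assume S: "add_subgroup S" and s: "s \<in> S"
  then have "s = 0 \<cdot> a \<oplus> s"
    using add_subgroup_subset[OF S] by auto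
  with s show "s \<in> zspan a S"
    unfolding zspan_def by blast
qed

lemma self_in_zspan: "a \<in> A \<Longrightarrow> add_subgroup S \<Longrightarrow> a \<in> zspan a S"
  using add_subgroup_zero[of S] zmult_one[of a] add_zero_right[of a]
  unfolding zspan_def by (metis (mono_tags, lifting) mem_Collect_eq)

lemma zspan_mono: "S \<subseteq> S' \<Longrightarrow> zspan a S \<subseteq> zspan a S'"
  unfolding zspan_def by blast

lemma zspan_subset: "add_subgroup S' \<Longrightarrow> a \<in> S' \<Longrightarrow> S \<subseteq> S' \<Longrightarrow> zspan a S \<subseteq> S'"
  unfolding zspan_def using add_subgroup_add zmult_in_add_subgroup by blast

text \<open>For an ideal N, \<^term>\<open>zeta_mod N\<close> is the preimage in A of \<open>\<zeta>(\<star>, A/N)\<close>, and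
  \<^term>\<open>lzeta2_mod N\<close> contains the preimage of the second \<open>\<star>\<close>-centre of A/N; working
  with preimages avoids quotient braces.\<close>

definition zeta_mod :: "'a set \<Rightarrow> 'a set" where
  "zeta_mod N = {z \<in> A. \<forall>y\<in>A. z \<star> y \<in> N \<and> y \<star> z \<in> N}"

definition lzeta2_mod :: "'a set \<Rightarrow> 'a set" where
  "lzeta2_mod N = {u \<in> A. \<forall>y\<in>A. u \<star> y \<in> zeta_mod N}"

lemma zeta_mod_subset: "zeta_mod N \<subseteq> A"
  by (auto simp: zeta_mod_def)

lemma zeta_modD: "z \<in> zeta_mod N \<Longrightarrow> y \<in> A \<Longrightarrow> z \<star> y \<in> N \<and> y \<star> z \<in> N"
  by (auto simp: zeta_mod_def)

lemma lzeta2_mod_subset: "lzeta2_mod N \<subseteq> A"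
  by (auto simp: lzeta2_mod_def)

lemma lzeta2_modD: "u \<in> lzeta2_mod N \<Longrightarrow> y \<in> A \<Longrightarrow> u \<star> y \<in> zeta_mod N"
  by (auto simp: lzeta2_mod_def)

context
  fixes N :: "'a set"
  assumes N: "is_ideal N"
begin

private lemmas N_add_subgroup = is_ideal_add_subgroup[OF N]

lemma ideal_subset_zeta_mod: "N \<subseteq> zeta_mod N"
  using N add_subgroup_subset[OF N_add_subgroup]
  by (auto simp: zeta_mod_def is_idealD)

lemma star_add_left_cong:
  assumes uvx: "u \<in> A" "v \<in> A" "x \<in> A" and w: "lam (minv u) v \<star> x \<in> N"
  shows "cong_mod N ((u \<oplus> v) \<star> x) (u \<star> x)"
proof -
  have "u \<star> (lam (minv u) v \<star> x) \<oplus> lam (minv u) v \<star> x \<in> N"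
    using N uvx w by (simp add: add_subgroup_add is_idealD)
  then show ?thesis
    using uvx by (simp add: star_add_left cong_mod_add_member N_add_subgroup)
qed

lemma star_add_ideal_left_cong:
  assumes u: "u \<in> A" and n: "n \<in> N" and x: "x \<in> A"
  shows "cong_mod N ((u \<oplus> n) \<star> x) (u \<star> x)"
proof -
  have nA: "n \<in> A"
    using n ideal_subset_zeta_mod zeta_mod_subset by blast
  have "minv u \<star> n \<in> N"
    using is_ideal_star_left[OF N _ n] u by simp
  then have "lam (minv u) n \<in> N"
    unfolding lam_def using n N_add_subgroup by (simp add: add_subgroup_add)
  then show ?thesis
    using u nA x is_ideal_star_right[OF N x] by (intro star_add_left_cong) auto
qed

lemma star_add_zeta_left_cong:
  assumes u: "u \<in> A" and z: "z \<in> zeta_mod N" and x: "x \<in> A"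
  shows "cong_mod N ((u \<oplus> z) \<star> x) (u \<star> x)"
proof -
  have zA: "z \<in> A"
    using z zeta_mod_subset by blast
  have n: "minv u \<star> z \<in> N"
    using zeta_modD[OF z] u by simp
  have "lam (minv u) z = z \<oplus> minv u \<star> z"
    unfolding lam_def using u zA by (intro add_commute) auto
  then have "cong_mod N (lam (minv u) z \<star> x) (z \<star> x)"
    using star_add_ideal_left_cong[OF zA n x] by simp
  then have "lam (minv u) z \<star> x \<in> N"
    using zeta_modD[OF z x] mem_if_cong_mod[OF N_add_subgroup] by blast
  then show ?thesis
    by (intro star_add_left_cong[OF u zA x])
qed

lemma add_subgroup_zeta_mod: "add_subgroup (zeta_mod N)"
  unfolding add_subgroup_def
proof (intro conjI ballI)
  show "zeta_mod N \<subseteq> A"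
    by (rule zeta_mod_subset)
  show "\<zero> \<in> zeta_mod N"
    using add_subgroup_zero[OF N_add_subgroup] by (simp add: zeta_mod_def)
next
  fix x y
  assume x: "x \<in> zeta_mod N" and y: "y \<in> zeta_mod N"
  then have xyA: "x \<in> A" "y \<in> A"
    using zeta_mod_subset by auto
  have "(x \<oplus> y) \<star> b \<in> N" if b: "b \<in> A" for b
    using mem_if_cong_mod[OF N_add_subgroup star_add_zeta_left_cong[OF xyA(1) y b]] zeta_modD[OF x b]
    by blast
  moreover have "b \<star> (x \<oplus> y) \<in> N" if b: "b \<in> A" for b
    using zeta_modD[OF x b] zeta_modD[OF y b] xyA b
    by (simp add: star_add_right add_subgroup_add[OF N_add_subgroup])
  ultimately show "x \<oplus> y \<in> zeta_mod N"
    using xyA by (simp add: zeta_mod_def)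
next
  fix x
  assume x: "x \<in> zeta_mod N"
  then have xA: "x \<in> A"
    using zeta_mod_subset by auto
  have "neg x \<star> b \<in> N" if b: "b \<in> A" for b
  proof -
    have "cong_mod N \<zero> (neg x \<star> b)"
      using star_add_zeta_left_cong[OF neg_closed[OF xA] x b] xA b by simp
    then show ?thesis
      using add_subgroup_zero[OF N_add_subgroup] mem_if_cong_mod[OF N_add_subgroup]
        cong_mod_sym[OF N_add_subgroup] by blast
  qed
  moreover have "b \<star> neg x \<in> N" if b: "b \<in> A" for b
    using zeta_modD[OF x b] xA b by (simp add: star_neg_right add_subgroup_neg[OF N_add_subgroup])
  ultimately show "neg x \<in> zeta_mod N"
    using xA by (simp add: zeta_mod_def)
qed

lemma mem_zeta_mod_if_cong: "cong_mod N a b \<Longrightarrow> b \<in> zeta_mod N \<Longrightarrow> a \<in> zeta_mod N"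
  using mem_if_cong_mod[OF add_subgroup_zeta_mod] cong_mod_mono[OF ideal_subset_zeta_mod] by blast

lemma minv_in_lzeta2_mod:
  assumes u: "u \<in> lzeta2_mod N"
  shows "minv u \<in> lzeta2_mod N"
proof -
  have uA: "u \<in> A"
    using u lzeta2_mod_subset by blast
  have "minv u \<star> y \<in> zeta_mod N" if y: "y \<in> A" for y
  proof -
    have z: "u \<star> y \<in> zeta_mod N"
      using lzeta2_modD[OF u y] .
    have "minv u \<star> (u \<star> y) \<oplus> (minv u \<star> y \<oplus> u \<star> y) = \<zero>"
      using star_mult_left[of "minv u" u y] uA y by (simp add: add_assoc)
    then have "minv u \<star> y \<oplus> u \<star> y = neg (minv u \<star> (u \<star> y))"
      using uA y by (simp add: neg_unique add_commute)
    also have "\<dots> \<in> N"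
      using zeta_modD[OF z] uA N_add_subgroup by (simp add: add_subgroup_neg)
    finally have "cong_mod N (minv u \<star> y) (neg (u \<star> y))"
      using uA y by (simp add: cong_mod_def)
    moreover have "neg (u \<star> y) \<in> zeta_mod N"
      using add_subgroup_neg[OF add_subgroup_zeta_mod z] .
    ultimately show ?thesis
      by (rule mem_zeta_mod_if_cong)
  qed
  then show ?thesis
    using uA by (simp add: lzeta2_mod_def)
qed

lemma star_add_lzeta2_left_cong:
  assumes u: "u \<in> lzeta2_mod N" and v: "v \<in> lzeta2_mod N" and x: "x \<in> A"
  shows "cong_mod N ((u \<oplus> v) \<star> x) (u \<star> x \<oplus> v \<star> x)"
proof -
  have uA: "u \<in> A" and vA: "v \<in> A"
    using u v lzeta2_mod_subset by auto
  define w where "w = lam (minv u) v"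
  have "minv u \<star> v \<in> zeta_mod N"
    using lzeta2_modD[OF minv_in_lzeta2_mod[OF u] vA] .
  then have "cong_mod N ((v \<oplus> minv u \<star> v) \<star> x) (v \<star> x)"
    by (rule star_add_zeta_left_cong[OF vA _ x])
  moreover have "v \<oplus> minv u \<star> v = w"
    unfolding w_def lam_def using uA vA by (intro add_commute) auto
  ultimately have wx: "cong_mod N (w \<star> x) (v \<star> x)"
    by simp
  then have "w \<star> x \<in> zeta_mod N"
    using lzeta2_modD[OF v x] by (rule mem_zeta_mod_if_cong)
  then have "cong_mod N (u \<star> (w \<star> x)) \<zero>"
    using zeta_modD uA cong_mod_zero[OF N_add_subgroup] by blast
  then have "cong_mod N (u \<star> x \<oplus> (u \<star> (w \<star> x) \<oplus> w \<star> x)) (u \<star> x \<oplus> (\<zero> \<oplus> v \<star> x))"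
    using uA x wx by (intro cong_mod_add cong_mod_refl N_add_subgroup) auto
  then show ?thesis
    using uA vA x by (simp add: star_add_left w_def)
qed

lemma add_subgroup_lzeta2_mod: "add_subgroup (lzeta2_mod N)"
  unfolding add_subgroup_def
proof (intro conjI ballI)
  show "lzeta2_mod N \<subseteq> A"
    by (rule lzeta2_mod_subset)
  show "\<zero> \<in> lzeta2_mod N"
    using add_subgroup_zero[OF add_subgroup_zeta_mod] by (simp add: lzeta2_mod_def)
next
  fix x y
  assume x: "x \<in> lzeta2_mod N" and y: "y \<in> lzeta2_mod N"
  have "(x \<oplus> y) \<star> b \<in> zeta_mod N" if b: "b \<in> A" for b
  proof -
    have "x \<star> b \<oplus> y \<star> b \<in> zeta_mod N"
      using lzeta2_modD[OF x b] lzeta2_modD[OF y b] add_subgroup_add[OF add_subgroup_zeta_mod]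
      by blast
    then show ?thesis
      by (rule mem_zeta_mod_if_cong[OF star_add_lzeta2_left_cong[OF x y b]])
  qed
  then show "x \<oplus> y \<in> lzeta2_mod N"
    using x y lzeta2_mod_subset by (auto simp: lzeta2_mod_def)
next
  fix x
  assume x: "x \<in> lzeta2_mod N"
  have xA: "x \<in> A"
    using x lzeta2_mod_subset by blast
  have mx: "minv x \<in> lzeta2_mod N"
    using minv_in_lzeta2_mod[OF x] .
  have "neg x \<star> b \<in> zeta_mod N" if b: "b \<in> A" for b
  proof -
    have "cong_mod N ((minv x \<oplus> minv x \<star> x) \<star> b) (minv x \<star> b)"
      using xA b lzeta2_modD[OF mx xA] by (intro star_add_zeta_left_cong) auto
    then show ?thesis
      using mem_zeta_mod_if_cong lzeta2_modD[OF mx b] xA by (simp flip: neg_eq_minv_add_star)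
  qed
  then show "neg x \<in> lzeta2_mod N"
    using xA by (simp add: lzeta2_mod_def)
qed

lemma star_neg_lzeta2_left_cong:
  assumes u: "u \<in> lzeta2_mod N" and x: "x \<in> A"
  shows "cong_mod N (neg u \<star> x) (neg (u \<star> x))"
proof -
  have uA: "u \<in> A"
    using u lzeta2_mod_subset by blast
  have "cong_mod N ((u \<oplus> neg u) \<star> x) (u \<star> x \<oplus> neg u \<star> x)"
    using star_add_lzeta2_left_cong[OF u add_subgroup_neg[OF add_subgroup_lzeta2_mod u] x] .
  then have "neg (u \<star> x \<oplus> neg u \<star> x) \<in> N"
    using uA x by (simp add: cong_mod_def)
  from add_subgroup_neg[OF N_add_subgroup this] have "u \<star> x \<oplus> neg u \<star> x \<in> N"
    using uA x by simp
  then show ?thesis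
    using uA x by (simp add: cong_mod_def add_commute)
qed

lemma star_zmult_lzeta2_left_cong:
  assumes u: "u \<in> lzeta2_mod N" and x: "x \<in> A"
  shows "cong_mod N ((m \<cdot> u) \<star> x) (m \<cdot> (u \<star> x))"
proof (induction m rule: int_induct[where k = 0])
  case base
  show ?case
    using x by (simp add: cong_mod_refl[OF N_add_subgroup])
next
  case (step1 i)
  have uA: "u \<in> A"
    using u lzeta2_mod_subset by blast
  have "cong_mod N ((i \<cdot> u \<oplus> u) \<star> x) ((i \<cdot> u) \<star> x \<oplus> u \<star> x)"
    using star_add_lzeta2_left_cong[OF zmult_in_add_subgroup[OF add_subgroup_lzeta2_mod u] u x] .
  moreover have "cong_mod N ((i \<cdot> u) \<star> x \<oplus> u \<star> x) (i \<cdot> (u \<star> x) \<oplus> u \<star> x)"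
    using step1(2) uA x by (intro cong_mod_add cong_mod_refl N_add_subgroup) auto
  ultimately show ?case
    using uA x cong_mod_trans[OF N_add_subgroup] by (simp add: zmult_add_left)
next
  case (step2 i)
  have uA: "u \<in> A"
    using u lzeta2_mod_subset by blast
  have "cong_mod N ((i \<cdot> u \<oplus> neg u) \<star> x) ((i \<cdot> u) \<star> x \<oplus> neg u \<star> x)"
    using star_add_lzeta2_left_cong[OF zmult_in_add_subgroup[OF add_subgroup_lzeta2_mod u]
        add_subgroup_neg[OF add_subgroup_lzeta2_mod u] x] .
  moreover have "cong_mod N ((i \<cdot> u) \<star> x \<oplus> neg u \<star> x) (i \<cdot> (u \<star> x) \<oplus> neg (u \<star> x))"
    using step2(2) star_neg_lzeta2_left_cong[OF u x] by (intro cong_mod_add N_add_subgroup)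
  ultimately show ?case
    using uA x cong_mod_trans[OF N_add_subgroup] by (simp add: zmult_diff_one)
qed

lemma star_zspan_left_cong:
  assumes b: "b \<in> lzeta2_mod N" and z: "z \<in> zeta_mod N" and x: "x \<in> A"
  shows "cong_mod N ((m \<cdot> b \<oplus> z) \<star> x) (m \<cdot> (b \<star> x))"
proof -
  have "cong_mod N ((m \<cdot> b \<oplus> z) \<star> x) ((m \<cdot> b) \<star> x)"
    using b z x lzeta2_mod_subset by (intro star_add_zeta_left_cong) auto
  then show ?thesis
    using star_zmult_lzeta2_left_cong[OF b x] cong_mod_trans[OF N_add_subgroup] by blast
qed

lemma is_ideal_zspan_zeta_mod:
  assumes b: "b \<in> lzeta2_mod N" and right: "\<forall>x\<in>A. x \<star> b \<in> zeta_mod N"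
  shows "is_ideal (zspan b (zeta_mod N))"
proof -
  have bA: "b \<in> A"
    using b lzeta2_mod_subset by blast
  have star_in_zeta: "a \<star> j \<in> zeta_mod N \<and> j \<star> a \<in> zeta_mod N"
    if a: "a \<in> A" and j: "j \<in> zspan b (zeta_mod N)" for a j
  proof -
    obtain m z where jz: "j = m \<cdot> b \<oplus> z" and z: "z \<in> zeta_mod N"
      using j unfolding zspan_def by blast
    have zA: "z \<in> A"
      using z zeta_mod_subset by blast
    have "a \<star> z \<in> zeta_mod N"
      using zeta_modD[OF z a] ideal_subset_zeta_mod by blast
    then have "m \<cdot> (a \<star> b) \<oplus> a \<star> z \<in> zeta_mod N"
      using right a by (simp add: add_subgroup_add[OF add_subgroup_zeta_mod]
          zmult_in_add_subgroup[OF add_subgroup_zeta_mod])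
    then have "a \<star> j \<in> zeta_mod N"
      unfolding jz using a bA zA by (simp add: star_add_right star_zmult_right)
    moreover have "m \<cdot> (b \<star> a) \<in> zeta_mod N"
      using lzeta2_modD[OF b a] zmult_in_add_subgroup[OF add_subgroup_zeta_mod] by blast
    then have "j \<star> a \<in> zeta_mod N"
      unfolding jz by (rule mem_zeta_mod_if_cong[OF star_zspan_left_cong[OF b z a]])
    ultimately show ?thesis ..
  qed
  show ?thesis
    unfolding is_ideal_def
    using add_subgroup_zspan[OF bA add_subgroup_zeta_mod] star_in_zeta
      subset_zspan[OF add_subgroup_zeta_mod] by blast
qed

lemma cong_zmult_in_zspan:
  assumes "b \<in> A" "e \<in> A" "cong_mod N y (k \<cdot> e)"
  shows "y \<in> zspan b (zspan e N)"
proof -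
  have span_e: "add_subgroup (zspan e N)"
    using assms(2) N_add_subgroup by (rule add_subgroup_zspan)
  have sub: "zspan e N \<subseteq> zspan b (zspan e N)"
    by (rule subset_zspan[OF span_e])
  then have "N \<subseteq> zspan b (zspan e N)" "k \<cdot> e \<in> zspan b (zspan e N)"
    using subset_zspan[OF N_add_subgroup, of e]
      zmult_in_add_subgroup[OF span_e self_in_zspan[OF assms(2) N_add_subgroup]] by blast+
  then show ?thesis
    using mem_if_cong_mod[OF add_subgroup_zspan[OF assms(1) span_e]] cong_mod_mono assms(3) by blast
qed

lemma star_zspan_closed:
  assumes b: "b \<in> lzeta2_mod N" and j: "j \<in> zspan b (zeta_mod N)"
    and i: "i \<in> zspan b (zspan (b \<star> b) N)"
  shows "j \<star> i \<in> zspan b (zspan (b \<star> b) N) \<and> i \<star> j \<in> zspan b (zspan (b \<star> b) N)"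
proof
  define e where "e = b \<star> b"
  have bA: "b \<in> A" and eZ: "e \<in> zeta_mod N"
    using b lzeta2_mod_subset lzeta2_modD[OF b] by (auto simp: e_def)
  have eA: "e \<in> A"
    using bA by (simp add: e_def)
  obtain m z where jz: "j = m \<cdot> b \<oplus> z" and z: "z \<in> zeta_mod N"
    using j unfolding zspan_def by blast
  obtain p w where iw: "i = p \<cdot> b \<oplus> w" and w: "w \<in> zspan e N"
    using i unfolding zspan_def e_def by blast
  obtain q n where wn: "w = q \<cdot> e \<oplus> n" and n: "n \<in> N"
    using w unfolding zspan_def by blast
  have zA: "z \<in> A" and nA: "n \<in> A" and jA: "j \<in> A"
    using z n zeta_mod_subset ideal_subset_zeta_mod bA jz by auto
  have jb: "cong_mod N (j \<star> b) (m \<cdot> e)"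
    unfolding jz e_def using star_zspan_left_cong[OF b z bA] .
  have "cong_mod N (p \<cdot> (j \<star> b) \<oplus> (q \<cdot> (j \<star> e) \<oplus> j \<star> n)) (p \<cdot> m \<cdot> e \<oplus> (\<zero> \<oplus> \<zero>))"
    using cong_mod_zmult[OF N_add_subgroup jb] zeta_modD[OF eZ jA] is_ideal_star_left[OF N jA n]
    by (intro cong_mod_add cong_mod_zero zmult_in_add_subgroup N_add_subgroup) auto
  then show "j \<star> i \<in> zspan b (zspan (b \<star> b) N)"
    unfolding iw wn e_def[symmetric] using jA bA eA nA
    by (intro cong_zmult_in_zspan) (simp_all add: star_add_right star_zmult_right zmult_zmult)
  have "cong_mod N (b \<star> j) (m \<cdot> e)"
    unfolding jz e_def using bA zA zeta_modD[OF z bA]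
    by (simp add: star_add_right star_zmult_right cong_mod_add_member N_add_subgroup)
  then have "cong_mod N (p \<cdot> (b \<star> j)) (p \<cdot> m \<cdot> e)"
    by (rule cong_mod_zmult[OF N_add_subgroup])
  moreover have "cong_mod N (i \<star> j) (p \<cdot> (b \<star> j))"
    unfolding iw using star_zspan_left_cong[OF b _ jA] w
      zspan_subset[OF add_subgroup_zeta_mod eZ ideal_subset_zeta_mod] by blast
  ultimately show "i \<star> j \<in> zspan b (zspan (b \<star> b) N)"
    unfolding e_def[symmetric] using cong_mod_trans[OF N_add_subgroup] bA eA
    by (intro cong_zmult_in_zspan) (auto simp: zmult_zmult)
qed

text \<open>The only use of the T-property: \<open>\<int>b + \<int>(b \<star> b) + N\<close> is an ideal of the ideal
  \<open>\<int>b + zeta_mod N\<close>, hence of A.\<close>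

lemma T_brace_star_in_zspan:
  assumes T: "T_brace B" and b: "b \<in> lzeta2_mod N" and right: "\<forall>x\<in>A. x \<star> b \<in> zeta_mod N"
    and x: "x \<in> A"
  shows "x \<star> b \<in> zspan b (zspan (b \<star> b) N) \<and> b \<star> x \<in> zspan b (zspan (b \<star> b) N)"
proof -
  have bA: "b \<in> A" and eZ: "b \<star> b \<in> zeta_mod N"
    using b lzeta2_mod_subset lzeta2_modD[OF b] by auto
  have span: "add_subgroup (zspan (b \<star> b) N)"
    using bA N_add_subgroup by (intro add_subgroup_zspan) auto
  have "zspan b (zspan (b \<star> b) N) \<subseteq> zspan b (zeta_mod N)"
    using zspan_mono[OF zspan_subset[OF add_subgroup_zeta_mod eZ ideal_subset_zeta_mod]] .
  then have "is_ideal (zspan b (zspan (b \<star> b) N))"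
    using T_brace_is_ideal[OF T is_ideal_zspan_zeta_mod[OF b right] add_subgroup_zspan[OF bA span]]
      star_zspan_closed[OF b] by blast
  then show ?thesis
    using is_idealD self_in_zspan[OF bA span] x by blast
qed

lemma zspan_zspan_cases:
  assumes y: "y \<in> zspan a (zspan c N)" "y \<in> zeta_mod N" and a: "a \<in> A" and c: "c \<in> zeta_mod N"
  obtains p where "p \<noteq> 0" "p \<cdot> a \<in> zeta_mod N" | q where "cong_mod N y (q \<cdot> c)"
proof -
  obtain p w where yw: "y = p \<cdot> a \<oplus> w" and w: "w \<in> zspan c N"
    using y(1) unfolding zspan_def by blast
  obtain q n where wn: "w = q \<cdot> c \<oplus> n" and n: "n \<in> N"
    using w unfolding zspan_def by blast
  have wZ: "w \<in> zeta_mod N"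
    using w zspan_subset[OF add_subgroup_zeta_mod c ideal_subset_zeta_mod] by blast
  have cA: "c \<in> A" and wA: "w \<in> A"
    using c wZ zeta_mod_subset by auto
  show ?thesis
  proof (cases "p = 0")
    case True
    then have "y = q \<cdot> c \<oplus> n"
      using yw wn wA by simp
    then have "cong_mod N y (q \<cdot> c)"
      using cA n by (simp add: cong_mod_add_member[OF N_add_subgroup])
    then show ?thesis
      by (rule that(2))
  next
    case False
    have "p \<cdot> a \<in> zeta_mod N"
      using add_subgroup_add_cancel_right[OF add_subgroup_zeta_mod zmult_closed[OF a] wZ] y(2) yw
      by simp
    with False show ?thesis
      by (rule that(1))
  qed
qed

lemma torsion_mod_of_zspan:
  assumes r: "r \<noteq> 0" "r \<cdot> c \<in> N" and a: "a \<in> A" and c: "c \<in> zeta_mod N"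
    and y: "y \<in> zspan a (zspan c N)" "y \<in> zeta_mod N"
    and coeff: "\<And>p. p \<cdot> a \<in> zeta_mod N \<Longrightarrow> p \<cdot> y \<in> N"
  shows "\<exists>s. s \<noteq> 0 \<and> s \<cdot> y \<in> N"
  using y a c
proof (cases rule: zspan_zspan_cases)
  case (1 p)
  then show ?thesis
    using coeff by blast
next
  case (2 q)
  moreover have "c \<in> A"
    using c zeta_mod_subset by blast
  ultimately have "cong_mod N (r \<cdot> y) (q \<cdot> r \<cdot> c)"
    using cong_mod_zmult[OF N_add_subgroup, of y "q \<cdot> c" r] by (simp add: zmult_zmult mult.commute)
  then have "r \<cdot> y \<in> N"
    using mem_if_cong_mod[OF N_add_subgroup] zmult_in_add_subgroup[OF N_add_subgroup r(2)] by blast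
  then show ?thesis
    using r(1) by blast
qed

lemma star_zmult_self_cong:
  assumes a: "a \<in> lzeta2_mod N"
  shows "cong_mod N ((m \<cdot> a) \<star> (m \<cdot> a)) ((m * m) \<cdot> (a \<star> a))"
proof -
  have "a \<in> A"
    using a lzeta2_mod_subset by blast
  then show ?thesis
    using star_zmult_lzeta2_left_cong[OF a, of "m \<cdot> a" m]
    by (simp add: star_zmult_right zmult_zmult)
qed

context
  fixes a :: 'a
  assumes T: "T_brace B" and a: "a \<in> lzeta2_mod N" and right: "\<forall>x\<in>A. x \<star> a \<in> zeta_mod N"
begin

private lemma aA: "a \<in> A"
  using a lzeta2_mod_subset by blast

text \<open>Applying the T-property to 2a rather than to a turns the coefficient of
  (2a) \<open>\<star>\<close> (2a) \<open>\<equiv>\<close> 4 (a \<open>\<star>\<close> a) into one of the form 2 - 4q, which cannot vanish.\<close>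

lemma star_self_torsion_mod: "\<exists>r. r \<noteq> 0 \<and> r \<cdot> (a \<star> a) \<in> N"
proof -
  define c where "c = a \<star> a"
  define b where "b = 2 \<cdot> a"
  have cA: "c \<in> A" and bA: "b \<in> A"
    using aA by (simp_all add: c_def b_def)
  have b: "b \<in> lzeta2_mod N"
    unfolding b_def using zmult_in_add_subgroup[OF add_subgroup_lzeta2_mod a] .
  have "\<forall>x\<in>A. x \<star> b \<in> zeta_mod N"
    unfolding b_def using right aA zmult_in_add_subgroup[OF add_subgroup_zeta_mod]
    by (simp add: star_zmult_right)
  then have span: "a \<star> b \<in> zspan b (zspan (b \<star> b) N)"
    using T_brace_star_in_zspan[OF T b _ aA] by blast
  have ab: "a \<star> b = 2 \<cdot> c"
    unfolding b_def c_def using aA by (simp add: star_zmult_right)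
  from span lzeta2_modD[OF a bA] bA lzeta2_modD[OF b bA] show ?thesis
  proof (cases rule: zspan_zspan_cases)
    case (1 p)
    then have "a \<star> p \<cdot> b \<in> N"
      using zeta_modD aA by blast
    then have "(p * 2) \<cdot> c \<in> N"
      using aA bA cA by (simp add: star_zmult_right ab zmult_zmult)
    then show ?thesis
      using \<open>p \<noteq> 0\<close> unfolding c_def by (intro exI[of _ "p * 2"]) simp
  next
    case (2 q)
    have "cong_mod N (q \<cdot> (b \<star> b)) ((q * 4) \<cdot> c)"
      using cong_mod_zmult[OF N_add_subgroup star_zmult_self_cong[OF a, of 2]] cA
      unfolding b_def c_def by (simp add: zmult_zmult)
    then have "cong_mod N (2 \<cdot> c) ((q * 4) \<cdot> c)"
      using 2 ab cong_mod_trans[OF N_add_subgroup] by auto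
    then have "(2 - q * 4) \<cdot> c \<in> N"
      using cA by (simp add: cong_mod_def zmult_uminus[symmetric] zmult_add_left[symmetric])
    moreover have "2 - q * 4 \<noteq> (0::int)"
      by presburger
    ultimately show ?thesis
      unfolding c_def by blast
  qed
qed

lemma star_torsion_mod:
  assumes x: "x \<in> A"
  shows "(\<exists>r. r \<noteq> 0 \<and> r \<cdot> (x \<star> a) \<in> N) \<and> (\<exists>r. r \<noteq> 0 \<and> r \<cdot> (a \<star> x) \<in> N)"
proof -
  obtain r where r: "r \<noteq> 0" "r \<cdot> (a \<star> a) \<in> N"
    using star_self_torsion_mod by blast
  have span: "x \<star> a \<in> zspan a (zspan (a \<star> a) N)" "a \<star> x \<in> zspan a (zspan (a \<star> a) N)"
    using T_brace_star_in_zspan[OF T a right x] by auto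
  have c: "a \<star> a \<in> zeta_mod N"
    using lzeta2_modD[OF a aA] .
  have "p \<cdot> (x \<star> a) \<in> N" if "p \<cdot> a \<in> zeta_mod N" for p
    using zeta_modD[OF that x] x aA by (simp add: star_zmult_right)
  moreover have "p \<cdot> (a \<star> x) \<in> N" if "p \<cdot> a \<in> zeta_mod N" for p
    using star_zmult_lzeta2_left_cong[OF a x, of p] zeta_modD[OF that x]
      mem_if_cong_mod[OF N_add_subgroup] cong_mod_sym[OF N_add_subgroup] by blast
  ultimately show ?thesis
    using torsion_mod_of_zspan[OF r aA c] span x right lzeta2_modD[OF a x] by blast
qed

end

end

definition tor_central :: "'a set \<Rightarrow> bool" where
  "tor_central I \<longleftrightarrow> is_ideal I \<and> (\<forall>i\<in>I. \<forall>x\<in>A. i \<star> x \<in> Tor \<and> x \<star> i \<in> Tor)"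

definition tor_radical :: "'a set" where
  "tor_radical = \<Union>{I. tor_central I}"

lemma tor_centralI:
  assumes "add_subgroup I" and "\<And>i x. i \<in> I \<Longrightarrow> x \<in> A \<Longrightarrow> i \<star> x \<in> I \<inter> Tor \<and> x \<star> i \<in> I \<inter> Tor"
  shows "tor_central I"
  using assms by (simp add: tor_central_def is_ideal_def)

lemma tor_central_zero: "tor_central {\<zero>}"
  by (rule tor_centralI) (auto simp: add_subgroup_def add_subgroup_zero[OF add_subgroup_torsion])

lemma tor_centralD:
  assumes "tor_central I"
  shows tor_central_add_subgroup: "add_subgroup I"
    and tor_central_star: "i \<in> I \<Longrightarrow> x \<in> A \<Longrightarrow> i \<star> x \<in> I \<inter> Tor \<and> x \<star> i \<in> I \<inter> Tor"
  using assms by (auto simp: tor_central_def is_ideal_def)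

lemma tor_central_sum:
  assumes I1: "tor_central I1" and I2: "tor_central I2"
  shows "tor_central {u \<oplus> v | u v. u \<in> I1 \<and> v \<in> I2}" (is "tor_central ?S")
proof -
  have i2: "is_ideal I2"
    using I2 by (simp add: tor_central_def)
  have A1: "I1 \<subseteq> A" and A2: "I2 \<subseteq> A"
    using add_subgroup_subset[OF tor_central_add_subgroup[OF I1]]
      add_subgroup_subset[OF tor_central_add_subgroup[OF I2]] by auto
  note tor1 = tor_central_star[OF I1] and tor2 = tor_central_star[OF I2]
  have "(u \<oplus> v) \<star> x \<in> ?S \<inter> Tor \<and> x \<star> (u \<oplus> v) \<in> ?S \<inter> Tor"
    if uv: "u \<in> I1" "v \<in> I2" and x: "x \<in> A" for u v x
  proof -
    have uA: "u \<in> A" and vA: "v \<in> A"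
      using uv A1 A2 by auto
    have I2T: "add_subgroup (I2 \<inter> Tor)"
      using add_subgroup_Int[OF is_ideal_add_subgroup[OF i2] add_subgroup_torsion] .
    define w where "w = lam (minv u) v"
    have "w \<in> I2"
      unfolding w_def lam_def using uv uA i2
      by (simp add: is_idealD add_subgroup_add[OF is_ideal_add_subgroup[OF i2]])
    then have wx: "w \<star> x \<in> I2 \<inter> Tor"
      using tor2 x by blast
    then have "u \<star> (w \<star> x) \<in> I2 \<inter> Tor"
      using tor2 uA by blast
    then have "u \<star> (w \<star> x) \<oplus> w \<star> x \<in> I2 \<inter> Tor"
      using wx add_subgroup_add[OF I2T] by blast
    moreover have "(u \<oplus> v) \<star> x = u \<star> x \<oplus> (u \<star> (w \<star> x) \<oplus> w \<star> x)"
      unfolding w_def using uA vA x by (rule star_add_left)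
    ultimately have "(u \<oplus> v) \<star> x \<in> ?S \<inter> Tor"
      using tor1[OF uv(1) x] add_subgroup_add[OF add_subgroup_torsion] by auto
    moreover have "x \<star> (u \<oplus> v) = x \<star> u \<oplus> x \<star> v"
      using x uA vA by (rule star_add_right)
    then have "x \<star> (u \<oplus> v) \<in> ?S \<inter> Tor"
      using tor1[OF uv(1) x] tor2[OF uv(2) x] add_subgroup_add[OF add_subgroup_torsion] by auto
    ultimately show ?thesis ..
  qed
  then show ?thesis
    using add_subgroup_set_plus[OF tor_central_add_subgroup[OF I1] tor_central_add_subgroup[OF I2]]
    by (intro tor_centralI) auto
qed

lemma tor_central_zspan:
  assumes N: "is_ideal N" "N \<subseteq> Tor" and R: "add_subgroup R" "N \<subseteq> R" "R \<subseteq> zeta_mod N"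
    and a: "a \<in> zeta_mod N"
  shows "tor_central (zspan a R)"
proof (rule tor_centralI)
  have aA: "a \<in> A"
    using a zeta_mod_subset by blast
  have aL: "a \<in> lzeta2_mod N"
    using a aA zeta_modD ideal_subset_zeta_mod[OF N(1)] by (auto simp: lzeta2_mod_def)
  have NS: "add_subgroup N"
    using is_ideal_add_subgroup[OF N(1)] .
  show "add_subgroup (zspan a R)"
    using aA R(1) by (rule add_subgroup_zspan)
  fix i x
  assume i: "i \<in> zspan a R" and x: "x \<in> A"
  obtain m g where ig: "i = m \<cdot> a \<oplus> g" and g: "g \<in> R"
    using i unfolding zspan_def by blast
  have gA: "g \<in> A"
    using g R(1) add_subgroup_subset by blast
  have "m \<cdot> (a \<star> x) \<in> N"
    using zeta_modD[OF a x] zmult_in_add_subgroup[OF NS] by blast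
  moreover have "cong_mod N (i \<star> x) (m \<cdot> (a \<star> x))"
    unfolding ig using star_zspan_left_cong[OF N(1) aL _ x] g R(3) by blast
  ultimately have "i \<star> x \<in> N"
    using mem_if_cong_mod[OF NS] by blast
  moreover have "x \<star> i = m \<cdot> (x \<star> a) \<oplus> x \<star> g"
    unfolding ig using aA x gA by (simp add: star_add_right star_zmult_right)
  then have "x \<star> i \<in> N"
    using zeta_modD[OF a x] zeta_modD[OF _ x] g R(3) add_subgroup_add[OF NS]
      zmult_in_add_subgroup[OF NS] by auto
  moreover have "N \<subseteq> zspan a R"
    using subset_zspan[OF R(1)] R(2) by blast
  ultimately show "i \<star> x \<in> zspan a R \<inter> Tor \<and> x \<star> i \<in> zspan a R \<inter> Tor"
    using N(2) by blast
qed

lemma mem_tor_radical_iff: "x \<in> tor_radical \<longleftrightarrow> (\<exists>I. tor_central I \<and> x \<in> I)"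
  by (auto simp: tor_radical_def)

lemma tor_central_tor_radical: "tor_central tor_radical"
proof (rule tor_centralI)
  show "add_subgroup tor_radical"
    unfolding add_subgroup_def
  proof (intro conjI ballI)
    show "tor_radical \<subseteq> A"
    proof
      fix x
      assume "x \<in> tor_radical"
      then obtain I where "tor_central I" "x \<in> I"
        by (auto simp: mem_tor_radical_iff)
      then show "x \<in> A"
        using add_subgroup_subset[OF tor_central_add_subgroup] by blast
    qed
    show "\<zero> \<in> tor_radical"
      using tor_central_zero by (auto simp: mem_tor_radical_iff)
  next
    fix x y
    assume "x \<in> tor_radical" "y \<in> tor_radical"
    then obtain I1 I2 where "tor_central I1" "x \<in> I1" "tor_central I2" "y \<in> I2"
      by (auto simp: mem_tor_radical_iff)
    then show "x \<oplus> y \<in> tor_radical"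
      unfolding mem_tor_radical_iff using tor_central_sum by blast
  next
    fix x
    assume "x \<in> tor_radical"
    then show "neg x \<in> tor_radical"
      using add_subgroup_neg[OF tor_central_add_subgroup] by (auto simp: mem_tor_radical_iff)
  qed
next
  fix i x
  assume "i \<in> tor_radical" "x \<in> A"
  then show "i \<star> x \<in> tor_radical \<inter> Tor \<and> x \<star> i \<in> tor_radical \<inter> Tor"
    using tor_central_star by (auto simp: mem_tor_radical_iff)
qed

lemma is_ideal_tor_radical_inter_torsion: "is_ideal (tor_radical \<inter> Tor)"
  unfolding is_ideal_def
  using add_subgroup_Int[OF tor_central_add_subgroup[OF tor_central_tor_radical]
      add_subgroup_torsion]
    tor_central_star[OF tor_central_tor_radical] by blast

lemma tor_radical_subset_zeta_mod: "tor_radical \<subseteq> zeta_mod (tor_radical \<inter> Tor)"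
  unfolding zeta_mod_def
  using add_subgroup_subset[OF tor_central_add_subgroup[OF tor_central_tor_radical]]
    tor_central_star[OF tor_central_tor_radical] by blast

lemma mem_tor_radical:
  assumes T: "T_brace B" and a: "a \<in> A"
    and central: "\<And>x. x \<in> A \<Longrightarrow> a \<star> x \<in> tor_radical \<and> x \<star> a \<in> tor_radical"
  shows "a \<in> tor_radical"
proof -
  let ?R = "tor_radical" and ?N = "tor_radical \<inter> Tor"
  have N: "is_ideal ?N"
    by (rule is_ideal_tor_radical_inter_torsion)
  have R: "add_subgroup ?R"
    using tor_central_add_subgroup[OF tor_central_tor_radical] .
  have aL: "a \<in> lzeta2_mod ?N" and right: "\<forall>x\<in>A. x \<star> a \<in> zeta_mod ?N"
    using a central tor_radical_subset_zeta_mod by (auto simp: lzeta2_mod_def)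
  have "a \<star> x \<in> ?N \<and> x \<star> a \<in> ?N" if x: "x \<in> A" for x
  proof -
    obtain r s where "r \<noteq> 0" "r \<cdot> (x \<star> a) \<in> Tor" "s \<noteq> 0" "s \<cdot> (a \<star> x) \<in> Tor"
      using star_torsion_mod[OF N T aL right x] by blast
    then have "x \<star> a \<in> Tor" "a \<star> x \<in> Tor"
      using torsion_of_zmult[of "x \<star> a" r] torsion_of_zmult[of "a \<star> x" s] a x by auto
    then show ?thesis
      using central[OF x] by blast
  qed
  then have "a \<in> zeta_mod ?N"
    using a by (simp add: zeta_mod_def)
  then have "tor_central (zspan a ?R)"
    using tor_central_zspan[OF N _ R _ tor_radical_subset_zeta_mod] by blast
  then show ?thesis
    using self_in_zspan[OF a R] unfolding tor_radical_def by blast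
qed

lemma zeta_inf_subset_tor_radical:
  assumes T: "T_brace B"
  shows "zeta_inf B \<subseteq> tor_radical"
proof
  fix a
  assume "a \<in> zeta_inf B"
  then show "a \<in> tor_radical"
  proof (induction rule: zeta_inf.induct)
    case zero
    show ?case
      using tor_central_zero by (auto simp: tor_radical_def)
  next
    case (step a)
    then show ?case
      by (intro mem_tor_radical[OF T]) auto
  qed
qed

lemma star_in_torsion_if_hypercentral:
  assumes "T_brace B" "star_hypercentral B" "a \<in> A" "b \<in> A"
  shows "a \<star> b \<in> Tor"
  using assms zeta_inf_subset_tor_radical tor_central_tor_radical
  by (auto simp: star_hypercentral_def tor_central_def)

lemma is_ideal_if_star_subset:
  "add_subgroup L \<Longrightarrow> \<forall>u\<in>A. \<forall>v\<in>A. u \<star> v \<in> L \<Longrightarrow> is_ideal L"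
  using add_subgroup_subset by (auto simp: is_ideal_def)

context
  fixes L :: "'a set"
  assumes L: "add_subgroup L"
begin

lemma mem_bcoset_iff: "x \<in> bcoset B L a \<longleftrightarrow> (\<exists>l\<in>L. x = a \<oplus> l)"
  by (auto simp: bcoset_def)

lemma self_in_bcoset: "a \<in> A \<Longrightarrow> a \<in> bcoset B L a"
  using add_subgroup_zero[OF L] by (force simp: mem_bcoset_iff)

lemma bcoset_subset:
  assumes "cong_mod L a b"
  shows "bcoset B L a \<subseteq> bcoset B L b"
proof
  fix x
  assume "x \<in> bcoset B L a"
  then obtain l where l: "l \<in> L" "x = a \<oplus> l"
    by (auto simp: mem_bcoset_iff)
  have "l \<in> A" and ab: "a \<in> A" "b \<in> A" "a \<oplus> neg b \<in> L"
    using l add_subgroup_subset[OF L] assms by (auto simp: cong_mod_def)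
  then have "x = b \<oplus> (a \<oplus> neg b \<oplus> l)"
    using l by (simp add: add_ac)
  then show "x \<in> bcoset B L b"
    using add_subgroup_add[OF L ab(3) l(1)] by (auto simp: mem_bcoset_iff)
qed

lemma bcoset_eq: "cong_mod L a b \<Longrightarrow> bcoset B L a = bcoset B L b"
  using bcoset_subset cong_mod_sym[OF L] by blast

lemma mem_if_bcoset_eq_zero: "c \<in> A \<Longrightarrow> bcoset B L c = bcoset B L \<zero> \<Longrightarrow> c \<in> L"
  using self_in_bcoset[of c] add_subgroup_subset[OF L] by (auto simp: mem_bcoset_iff)

lemma some_in_bcoset_cong: "a \<in> A \<Longrightarrow> cong_mod L (SOME x. x \<in> bcoset B L a) a"
proof -
  assume a: "a \<in> A"
  have "(SOME x. x \<in> bcoset B L a) \<in> bcoset B L a"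
    using self_in_bcoset[OF a] by (rule someI)
  then obtain l where "l \<in> L" "(SOME x. x \<in> bcoset B L a) = a \<oplus> l"
    by (auto simp: mem_bcoset_iff)
  then show ?thesis
    using a add_subgroup_subset[OF L] cong_mod_add_member[OF L a] by auto
qed

abbreviation Q :: "'a set brace_struct" where
  "Q \<equiv> quot_brace B L"

lemma quot_carrier: "bcar Q = bcoset B L ` A"
  by (simp add: quot_brace_def)

lemma quot_zero: "bzero Q = bcoset B L \<zero>"
  by (simp add: quot_brace_def)

lemma quot_add:
  assumes "a \<in> A" "b \<in> A"
  shows "badd Q (bcoset B L a) (bcoset B L b) = bcoset B L (a \<oplus> b)"
  using cong_mod_add[OF L some_in_bcoset_cong some_in_bcoset_cong] assms
  by (simp add: quot_brace_def bcoset_eq)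

lemma quot_mult:
  assumes star: "\<forall>u\<in>A. \<forall>v\<in>A. u \<star> v \<in> L" and "a \<in> A" "b \<in> A"
  shows "bmul Q (bcoset B L a) (bcoset B L b) = bcoset B L (a \<oplus> b)"
proof -
  define x where "x = (SOME x. x \<in> bcoset B L a)"
  define y where "y = (SOME y. y \<in> bcoset B L b)"
  have x: "cong_mod L x a" and y: "cong_mod L y b"
    unfolding x_def y_def using assms some_in_bcoset_cong by auto
  then have xyA: "x \<in> A" "y \<in> A"
    by (auto simp: cong_mod_def)
  have "cong_mod L (x \<oplus> y \<oplus> x \<star> y) (a \<oplus> b \<oplus> \<zero>)"
    using x y star xyA by (intro cong_mod_add[OF L] cong_mod_zero[OF L]) auto
  then have "cong_mod L (x \<odot> y) (a \<oplus> b)"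
    using xyA assms by (simp add: mult_eq_add_star)
  then show ?thesis
    by (simp add: quot_brace_def bcoset_eq x_def y_def)
qed

lemma quot_neg:
  assumes a: "a \<in> A"
  shows "bneg Q (bcoset B L a) = bcoset B L (neg a)"
proof -
  have "inv\<^bsub>addgrp Q\<^esub> (bcoset B L a) = bcoset B L (neg a)"
    unfolding m_inv_def
  proof (rule the_equality)
    show "bcoset B L (neg a) \<in> carrier (addgrp Q) \<and>
        bcoset B L a \<otimes>\<^bsub>addgrp Q\<^esub> bcoset B L (neg a) = \<one>\<^bsub>addgrp Q\<^esub> \<and>
        bcoset B L (neg a) \<otimes>\<^bsub>addgrp Q\<^esub> bcoset B L a = \<one>\<^bsub>addgrp Q\<^esub>"
      using a by (simp add: quot_add quot_carrier quot_zero)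
  next
    fix Y
    assume Y: "Y \<in> carrier (addgrp Q) \<and> bcoset B L a \<otimes>\<^bsub>addgrp Q\<^esub> Y = \<one>\<^bsub>addgrp Q\<^esub>
        \<and> Y \<otimes>\<^bsub>addgrp Q\<^esub> bcoset B L a = \<one>\<^bsub>addgrp Q\<^esub>"
    then obtain b where b: "b \<in> A" "Y = bcoset B L b"
      by (auto simp: quot_carrier)
    then have "bcoset B L (a \<oplus> b) = bcoset B L \<zero>"
      using Y a by (simp add: quot_add quot_zero)
    then have "b \<oplus> neg (neg a) \<in> L"
      using mem_if_bcoset_eq_zero a b by (simp add: add_commute)
    then show "Y = bcoset B L (neg a)"
      using a b bcoset_eq by (simp add: cong_mod_def)
  qed
  then show ?thesis
    by (simp add: bneg_def)
qed

lemma abelian_quot_brace: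
  assumes star: "\<forall>u\<in>A. \<forall>v\<in>A. u \<star> v \<in> L"
  shows "abelian_brace Q"
  unfolding abelian_brace_def
proof (intro ballI)
  fix X Y
  assume "X \<in> bcar Q" "Y \<in> bcar Q"
  then obtain x y where x: "x \<in> A" "X = bcoset B L x" and y: "y \<in> A" "Y = bcoset B L y"
    by (auto simp: quot_carrier)
  have "bstar Q X Y = bcoset B L (x \<oplus> y \<oplus> neg x \<oplus> neg y)"
    using x y by (simp add: bstar_def bsub_def quot_mult[OF star] quot_neg quot_add)
  also have "x \<oplus> y \<oplus> neg x \<oplus> neg y = \<zero>"
    using x y by (simp add: add_ac)
  finally show "bstar Q X Y = bzero Q"
    by (simp add: quot_zero)
qed

end

end

theorem corollary3:
  fixes B :: "'a brace_struct"
  assumes "brace B"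
    and "star_hypercentral B"
    and "T_brace B"
    and "\<not> add_periodic B"
  shows "brace_ideal (torsion B) B \<and> abelian_brace (quot_brace B (torsion B))"
proof -
  interpret left_brace B
    by (rule left_brace.intro) (rule assms(1))
  have "\<forall>u\<in>bcar B. \<forall>v\<in>bcar B. bstar B u v \<in> torsion B"
    using star_in_torsion_if_hypercentral assms(2,3) by blast
  then show ?thesis
    using is_ideal_if_star_subset abelian_quot_brace add_subgroup_torsion
    by (simp add: brace_ideal_iff)
qed

end
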